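(* Let $q\in(0,1)$. For all $\nu\in\mathfrak h^*$, we have $\varphi^\nu_1(q^{2\rho})=0$ if and only if there exists $\alpha\in\Delta_+$ such that $(\nu,\alpha^\vee)\in 2\pi i\log(q_\alpha)^{-1}\mathbb{Z}\setminus\{0\}$.
   Context: $K$ is a connected simply connected compact simple Lie group with complexification $G=KAN$, $\mathfrak h$ a Cartan subalgebra, $\Delta_+$ positive roots, $W$ the Weyl group with length $l$, $\rho=\frac12\sum_{\alpha\in\Delta_+}\alpha$, $(\cdot,\cdot)$ normalized by $(\alpha,\alpha)=2$ for short roots, $\alpha^\vee=2\alpha/(\alpha,\alpha)$, $q_\alpha=q^{(\alpha,\alpha)/2}$. For $\mu\in\mathfrak h^*_{\mathbb{R}}$, $q^\mu\in A$. With $A_\nu(q^\mu)=\sum_{w\in W}(-1)^{l(w)}q^{(\mu,w\nu)}$ and $\chi_\nu(q^\mu)=A_{\nu+\rho}(q^\mu)/A_\rho(q^\mu)$, $\chi_\nu(1)=\prod_{\alpha\in\Delta_+}(\nu+\rho,\alpha)/\prod_{\alpha\in\Delta_+}(\rho,\alpha)$, define $\varphi^\nu_1(q^{\mu})=\chi_{\frac12\nu-\rho}(q^\mu)/\chi_{\frac12\nu-\rho}(1)$, understood as an analytic function of $\nu$ (extended analytically where the formula gives $0/0$). *)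

theory Defs
  imports "HOL-Analysis.Analysis"
begin

text \<open>Model: the real dual Cartan space is the set of real-coordinate vectors inside
  complex^'n (the complex dual Cartan space), with the complex-bilinear extension
  of the (suitably normalised) standard inner product.\<close>

definition bf :: "complex^'n \<Rightarrow> complex^'n \<Rightarrow> complex" where
  "bf x y = (\<Sum>i\<in>UNIV. x$i * y$i)"

definition csm :: "complex \<Rightarrow> complex^'n \<Rightarrow> complex^'n" where
  "csm c v = (\<chi> i. c * v$i)"

definition realv :: "complex^'n \<Rightarrow> bool" where
  "realv v \<longleftrightarrow> (\<forall>i. v$i \<in> \<real>)"

definition coroot :: "complex^'n \<Rightarrow> complex^'n" where
  "coroot \<alpha> = csm (2 / bf \<alpha> \<alpha>) \<alpha>"

definition refl :: "complex^'n \<Rightarrow> complex^'n \<Rightarrow> complex^'n" where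
  "refl \<alpha> v = v - csm (bf v (coroot \<alpha>)) \<alpha>"

text \<open>Reduced irreducible (crystallographic) root system spanning the real space,
  normalised so that short roots have (alpha,alpha) = 2.\<close>
definition simple_root_system :: "(complex^'n) set \<Rightarrow> bool" where
  "simple_root_system R \<longleftrightarrow>
     finite R \<and> 0 \<notin> R \<and> (\<forall>\<alpha>\<in>R. realv \<alpha>) \<and>
     (\<forall>v. realv v \<longrightarrow> (\<exists>c::complex^'n \<Rightarrow> real. v = (\<Sum>\<alpha>\<in>R. csm (of_real (c \<alpha>)) \<alpha>))) \<and>
     (\<forall>\<alpha>\<in>R. \<forall>\<beta>\<in>R. refl \<alpha> \<beta> \<in> R) \<and>
     (\<forall>\<alpha>\<in>R. \<forall>\<beta>\<in>R. bf \<beta> (coroot \<alpha>) \<in> \<int>) \<and>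
     (\<forall>\<alpha>\<in>R. \<forall>c::real. csm (of_real c) \<alpha> \<in> R \<longrightarrow> c = 1 \<or> c = -1) \<and>
     \<not> (\<exists>A B. A \<union> B = R \<and> A \<noteq> {} \<and> B \<noteq> {} \<and> A \<inter> B = {} \<and>
            (\<forall>\<alpha>\<in>A. \<forall>\<beta>\<in>B. bf \<alpha> \<beta> = 0)) \<and>
     (\<forall>\<alpha>\<in>R. Re (bf \<alpha> \<alpha>) \<ge> 2) \<and> (\<exists>\<alpha>\<in>R. bf \<alpha> \<alpha> = 2)"

definition regular :: "(complex^'n) set \<Rightarrow> complex^'n \<Rightarrow> bool" where
  "regular R \<gamma> \<longleftrightarrow> realv \<gamma> \<and> (\<forall>\<alpha>\<in>R. bf \<alpha> \<gamma> \<noteq> 0)"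

definition pos_roots :: "(complex^'n) set \<Rightarrow> complex^'n \<Rightarrow> (complex^'n) set" where
  "pos_roots R \<gamma> = {\<alpha>\<in>R. Re (bf \<alpha> \<gamma>) > 0}"

definition simple_roots :: "(complex^'n) set \<Rightarrow> complex^'n \<Rightarrow> (complex^'n) set" where
  "simple_roots R \<gamma> = {\<alpha>\<in>pos_roots R \<gamma>.
     \<not> (\<exists>\<beta>\<in>pos_roots R \<gamma>. \<exists>\<delta>\<in>pos_roots R \<gamma>. \<alpha> = \<beta> + \<delta>)}"

definition rho :: "(complex^'n) set \<Rightarrow> complex^'n \<Rightarrow> complex^'n" where
  "rho R \<gamma> = csm (1/2) (\<Sum>\<alpha>\<in>pos_roots R \<gamma>. \<alpha>)"

inductive_set weyl :: "(complex^'n) set \<Rightarrow> (complex^'n \<Rightarrow> complex^'n) set"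
  for R where
  weyl_id: "id \<in> weyl R"
| weyl_step: "w \<in> weyl R \<Longrightarrow> \<alpha> \<in> R \<Longrightarrow> refl \<alpha> \<circ> w \<in> weyl R"

definition word_map :: "(complex^'n) list \<Rightarrow> (complex^'n \<Rightarrow> complex^'n)" where
  "word_map as = foldr (\<lambda>\<alpha> f. refl \<alpha> \<circ> f) as id"

definition wlen :: "(complex^'n) set \<Rightarrow> complex^'n \<Rightarrow> (complex^'n \<Rightarrow> complex^'n) \<Rightarrow> nat" where
  "wlen R \<gamma> w = (LEAST k. \<exists>as. length as = k \<and> set as \<subseteq> simple_roots R \<gamma> \<and> w = word_map as)"

definition qpow :: "real \<Rightarrow> complex \<Rightarrow> complex" where
  "qpow q z = exp (z * of_real (ln q))"

definition Aalt :: "(complex^'n) set \<Rightarrow> complex^'n \<Rightarrow> real \<Rightarrow> complex^'n \<Rightarrow> complex^'n \<Rightarrow> complex" where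
  "Aalt R \<gamma> q \<nu> \<mu> = (\<Sum>w\<in>weyl R. (-1) ^ wlen R \<gamma> w * qpow q (bf \<mu> (w \<nu>)))"

definition chi :: "(complex^'n) set \<Rightarrow> complex^'n \<Rightarrow> real \<Rightarrow> complex^'n \<Rightarrow> complex^'n \<Rightarrow> complex" where
  "chi R \<gamma> q \<nu> \<mu> = Aalt R \<gamma> q (\<nu> + rho R \<gamma>) \<mu> / Aalt R \<gamma> q (rho R \<gamma>) \<mu>"

text \<open>chi_nu(1), given by the Weyl dimension formula.\<close>
definition chi1 :: "(complex^'n) set \<Rightarrow> complex^'n \<Rightarrow> complex^'n \<Rightarrow> complex" where
  "chi1 R \<gamma> \<nu> = (\<Prod>\<alpha>\<in>pos_roots R \<gamma>. bf (\<nu> + rho R \<gamma>) \<alpha>) / (\<Prod>\<alpha>\<in>pos_roots R \<gamma>. bf (rho R \<gamma>) \<alpha>)"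

text \<open>The naive formula for phi^nu_1(q^mu), as a function of nu.\<close>
definition phi_raw :: "(complex^'n) set \<Rightarrow> complex^'n \<Rightarrow> real \<Rightarrow> complex^'n \<Rightarrow> complex^'n \<Rightarrow> complex" where
  "phi_raw R \<gamma> q \<nu> \<mu> =
     chi R \<gamma> q (csm (1/2) \<nu> - rho R \<gamma>) \<mu> / chi1 R \<gamma> (csm (1/2) \<nu> - rho R \<gamma>)"

text \<open>phi^nu_1(q^mu): the (analytic, hence continuous) extension in nu of the naive
  formula from the dense open set where chi_{nu/2-rho}(1) is nonzero.\<close>
definition phi1 :: "(complex^'n) set \<Rightarrow> complex^'n \<Rightarrow> real \<Rightarrow> complex^'n \<Rightarrow> complex^'n \<Rightarrow> complex" where
  "phi1 R \<gamma> q \<nu> \<mu> =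
     Lim (at \<nu> within {\<nu>'. chi1 R \<gamma> (csm (1/2) \<nu>' - rho R \<gamma>) \<noteq> 0})
         (\<lambda>\<nu>'. phi_raw R \<gamma> q \<nu>' \<mu>)"

end

theory Submission
  imports Defs
begin

text \<open>
  By the Weyl denominator formula, the alternating sum \<open>A\<^sub>\<rho>\<close> at \<open>q^\<mu>\<close> is a nonzero constant times
  the product over \<open>\<alpha> > 0\<close> of \<open>q^((\<alpha>,\<mu>)/2) - q^(-(\<alpha>,\<mu>)/2)\<close>. Since \<open>(\<mu>, w \<nu>) = (w\<^sup>-\<^sup>1 \<mu>, \<nu>)\<close>,
  the value of \<open>\<chi>\<close> at weight \<open>\<nu>/2 - \<rho>\<close> and point \<open>q^(2\<rho>)\<close> is \<open>A\<^sub>\<rho>(q^\<nu>) / A\<^sub>\<rho>(q^(2\<rho>))\<close>, and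
  after dividing by its value at \<open>1\<close>, namely \<open>\<Prod> (\<alpha>,\<nu>)/2 / \<Prod> (\<rho>,\<alpha>)\<close>, what remains is, up to a
  nonzero constant, the product over \<open>\<alpha> > 0\<close> of \<open>(q^(z/2) - q^(-z/2)) / (z/2)\<close> with \<open>z = (\<alpha>,\<nu>)\<close>.
  This is continuous in \<open>\<nu>\<close>, hence it is the analytic extension \<open>phi1\<close>, and a factor vanishes
  exactly when \<open>z \<noteq> 0\<close> and \<open>z log q \<in> 2\<pi>i\<int>\<close>.

  For the denominator formula itself, antisymmetrising the expanded product over the Weyl group
  writes it as a combination of alternating sums \<open>A\<^sub>\<lambda>\<close> with \<open>\<lambda>\<close> half a signed sum of the positive
  roots. Such a \<open>\<lambda>\<close> is either orthogonal to some root, and then \<open>A\<^sub>\<lambda> = 0\<close>, or Weyl conjugate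
  to a strictly dominant one, which has to be \<open>\<rho>\<close>.
\<close>

section \<open>Bilinear form, scalar multiplication and reflections\<close>

lemma csm_nth [simp]: "csm c v $ i = c * v $ i"
  by (simp add: csm_def)

lemma bf_commute: "bf x y = bf y x"
  unfolding bf_def by (simp add: mult.commute)

lemma bf_add_left [simp]: "bf (x + y) z = bf x z + bf y z"
  unfolding bf_def by (simp add: distrib_right sum.distrib)

lemma bf_add_right [simp]: "bf z (x + y) = bf z x + bf z y"
  unfolding bf_def by (simp add: distrib_left sum.distrib)

lemma bf_diff_left [simp]: "bf (x - y) z = bf x z - bf y z"
  unfolding bf_def by (simp add: left_diff_distrib sum_subtractf)

lemma bf_diff_right [simp]: "bf z (x - y) = bf z x - bf z y"
  unfolding bf_def by (simp add: right_diff_distrib sum_subtractf)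

lemma bf_minus_left [simp]: "bf (- x) z = - bf x z"
  unfolding bf_def by (simp add: sum_negf)

lemma bf_minus_right [simp]: "bf z (- x) = - bf z x"
  unfolding bf_def by (simp add: sum_negf)

lemma bf_csm_left [simp]: "bf (csm c x) z = c * bf x z"
  unfolding bf_def by (simp add: sum_distrib_left mult.assoc)

lemma bf_csm_right [simp]: "bf z (csm c x) = c * bf z x"
  unfolding bf_def by (simp add: sum_distrib_left algebra_simps)

lemma bf_zero_left [simp]: "bf 0 z = 0"
  unfolding bf_def by simp

lemma bf_zero_right [simp]: "bf z 0 = 0"
  unfolding bf_def by simp

lemma bf_sum_left: "bf (\<Sum>a\<in>A. f a) z = (\<Sum>a\<in>A. bf (f a) z)"
  by (induction A rule: infinite_finite_induct) auto

lemma bf_sum_list_left: "bf (sum_list xs) z = (\<Sum>x\<leftarrow>xs. bf x z)"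
  by (induction xs) auto

lemma csm_add [simp]: "csm c (x + y) = csm c x + csm c y"
  by (simp add: vec_eq_iff algebra_simps)

lemma csm_diff [simp]: "csm c (x - y) = csm c x - csm c y"
  by (simp add: vec_eq_iff algebra_simps)

lemma csm_minus [simp]: "csm c (- x) = - csm c x"
  by (simp add: vec_eq_iff)

lemma csm_add_left: "csm (a + b) x = csm a x + csm b x"
  by (simp add: vec_eq_iff algebra_simps)

lemma csm_diff_left: "csm (a - b) x = csm a x - csm b x"
  by (simp add: vec_eq_iff algebra_simps)

lemma csm_csm [simp]: "csm a (csm b x) = csm (a * b) x"
  by (simp add: vec_eq_iff)

lemma csm_one [simp]: "csm 1 x = x"
  by (simp add: vec_eq_iff)

lemma csm_zero [simp]: "csm 0 x = 0"
  by (simp add: vec_eq_iff)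

lemma csm_zero_right [simp]: "csm c 0 = 0"
  by (simp add: vec_eq_iff)

lemma csm_minus_one [simp]: "csm (-1) x = - x"
  by (simp add: vec_eq_iff)

lemma csm_two: "csm 2 x = x + x"
  by (simp add: vec_eq_iff algebra_simps)

lemma csm_sum: "csm c (\<Sum>a\<in>A. f a) = (\<Sum>a\<in>A. csm c (f a))"
  by (induction A rule: infinite_finite_induct) auto

lemma csm_of_real_eq_scaleR: "csm (of_real t) x = t *\<^sub>R x"
  unfolding vec_eq_iff by (simp add: scaleR_conv_of_real[where 'a=complex])

lemma csm_eq_self_imp_one: "x \<noteq> 0 \<Longrightarrow> csm c x = x \<Longrightarrow> c = 1"
  by (auto simp: vec_eq_iff)

lemma realv_diff [intro]: "realv x \<Longrightarrow> realv y \<Longrightarrow> realv (x - y)"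
  unfolding realv_def by auto

lemma realv_csm [intro]: "c \<in> \<real> \<Longrightarrow> realv x \<Longrightarrow> realv (csm c x)"
  unfolding realv_def by auto

lemma realv_sum [intro]: "(\<And>a. a \<in> A \<Longrightarrow> realv (f a)) \<Longrightarrow> realv (\<Sum>a\<in>A. f a)"
  by (induction A rule: infinite_finite_induct) (auto simp: realv_def)

lemma bf_in_Reals: "realv x \<Longrightarrow> realv y \<Longrightarrow> bf x y \<in> \<real>"
  unfolding realv_def bf_def by (auto intro!: sum_in_Reals)

lemma bf_eq_of_real_Re: "realv x \<Longrightarrow> realv y \<Longrightarrow> bf x y = of_real (Re (bf x y))"
  using bf_in_Reals by (metis Reals_cases Re_complex_of_real)

lemma Re_bf_self: "realv x \<Longrightarrow> Re (bf x x) = (\<Sum>i\<in>UNIV. (Re (x$i))\<^sup>2)"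
  unfolding bf_def realv_def by (simp add: complex_is_Real_iff power2_eq_square)

lemma realv_eq_0_if_Re_bf_self_le_0:
  assumes "realv x" and "Re (bf x x) \<le> 0"
  shows "x = 0"
proof -
  have "(\<Sum>i\<in>UNIV. (Re (x$i))\<^sup>2) = 0"
    using assms Re_bf_self[of x] sum_nonneg[of UNIV "\<lambda>i. (Re (x$i))\<^sup>2"] by simp
  then have "\<forall>i. Re (x$i) = 0" by (simp add: sum_nonneg_eq_0_iff)
  then show "x = 0"
    using \<open>realv x\<close> by (simp add: realv_def vec_eq_iff complex_eq_iff complex_is_Real_iff)
qed

lemma realv_collinear_if_bf_sq_ge:
  assumes "realv x" "realv y" "Re (bf y y) > 0"
    and "(Re (bf x y))\<^sup>2 \<ge> Re (bf x x) * Re (bf y y)"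
  shows "x = csm (of_real (Re (bf x y) / Re (bf y y))) y"
proof -
  define t where "t = Re (bf x y) / Re (bf y y)"
  define z where "z = x - csm (of_real t) y"
  have "bf z z = bf x x - 2 * of_real t * bf x y + (of_real t)\<^sup>2 * bf y y"
    unfolding z_def by (simp add: bf_commute[of y x] algebra_simps power2_eq_square)
  then have "Re (bf z z) = Re (bf x x) - 2 * t * Re (bf x y) + t\<^sup>2 * Re (bf y y)"
    by (simp add: power2_eq_square)
  also have "\<dots> = Re (bf x x) - (Re (bf x y))\<^sup>2 / Re (bf y y)"
    unfolding t_def using assms(3) by (simp add: field_simps power2_eq_square)
  also have "\<dots> \<le> 0"
    using assms(3,4) by (simp add: field_simps)
  finally have "Re (bf z z) \<le> 0" .
  moreover have "realv z"
    unfolding z_def using assms(1,2) by (intro realv_diff realv_csm) auto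
  ultimately have "z = 0"
    by (simp add: realv_eq_0_if_Re_bf_self_le_0)
  then show ?thesis unfolding z_def t_def by simp
qed

definition csm_linear :: "(complex^'n \<Rightarrow> complex^'n) \<Rightarrow> bool" where
  "csm_linear f \<longleftrightarrow> (\<forall>x y. f (x + y) = f x + f y) \<and> (\<forall>c x. f (csm c x) = csm c (f x))"

lemma csm_linear_add: "csm_linear f \<Longrightarrow> f (x + y) = f x + f y"
  unfolding csm_linear_def by blast

lemma csm_linear_csm: "csm_linear f \<Longrightarrow> f (csm c x) = csm c (f x)"
  unfolding csm_linear_def by blast

lemma csm_linear_zero: "csm_linear f \<Longrightarrow> f 0 = 0"
  using csm_linear_csm[of f 0 0] by simp

lemma csm_linear_minus: "csm_linear f \<Longrightarrow> f (- x) = - f x"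
  using csm_linear_csm[of f "-1" x] by simp

lemma csm_linear_diff: "csm_linear f \<Longrightarrow> f (x - y) = f x - f y"
  using csm_linear_add[of f x "- y"] csm_linear_minus[of f y] by simp

lemma csm_linear_sum: "csm_linear f \<Longrightarrow> f (\<Sum>a\<in>A. g a) = (\<Sum>a\<in>A. f (g a))"
  by (induction A rule: infinite_finite_induct) (auto simp: csm_linear_zero csm_linear_add)

lemma csm_linear_id: "csm_linear id"
  unfolding csm_linear_def by simp

lemma csm_linear_comp: "csm_linear f \<Longrightarrow> csm_linear g \<Longrightarrow> csm_linear (f \<circ> g)"
  unfolding csm_linear_def by simp

lemma bf_coroot: "bf x (coroot a) = 2 * bf x a / bf a a"
  unfolding coroot_def by simp

lemma csm_linear_refl: "csm_linear (refl a)"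
  unfolding csm_linear_def refl_def by (auto simp: algebra_simps csm_add_left csm_diff_left)

lemma refl_self: "bf a a \<noteq> 0 \<Longrightarrow> refl a a = - a"
  unfolding refl_def by (simp add: bf_coroot csm_two)

lemma refl_fixes_orth: "bf x a = 0 \<Longrightarrow> refl a x = x"
  unfolding refl_def by (simp add: bf_coroot)

lemma bf_refl_refl: "bf a a \<noteq> 0 \<Longrightarrow> bf (refl a x) (refl a y) = bf x y"
  unfolding refl_def by (simp add: bf_coroot bf_commute[of a x] bf_commute[of a y] field_simps)

lemma refl_refl: "bf a a \<noteq> 0 \<Longrightarrow> refl a (refl a x) = x"
  unfolding refl_def by (simp add: bf_coroot vec_eq_iff field_simps)

lemma refl_uminus: "refl (- a) = refl a"
  unfolding refl_def coroot_def by (auto simp: vec_eq_iff)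

lemma realv_refl: "realv a \<Longrightarrow> realv x \<Longrightarrow> realv (refl a x)"
  unfolding refl_def bf_coroot
  by (intro realv_diff realv_csm Reals_divide Reals_mult) (auto intro: bf_in_Reals)

lemma refl_refl_conj:
  assumes "bf a a \<noteq> 0"
  shows "refl (refl a b) = refl a \<circ> refl b \<circ> refl a"
proof
  fix x
  have "bf (refl a x) b = bf x (refl a b)"
    using bf_refl_refl[OF assms, of x "refl a b"] by (simp add: refl_refl[OF assms])
  then have "bf (refl a x) (coroot b) = bf x (coroot (refl a b))"
    by (simp add: bf_coroot bf_refl_refl[OF assms])
  then show "refl (refl a b) x = (refl a \<circ> refl b \<circ> refl a) x"
    unfolding comp_apply refl_def[of b]
    by (simp add: csm_linear_diff[OF csm_linear_refl] csm_linear_csm[OF csm_linear_refl]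
        refl_refl[OF assms] refl_def[of "refl a b"])
qed

lemma Re_bf_sum_list_left: "Re (bf (sum_list xs) y) = (\<Sum>x\<leftarrow>xs. Re (bf x y))"
  by (induction xs) auto

lemma Re_bf_sum_list_pos:
  assumes "xs \<noteq> []" and "\<And>x. x \<in> set xs \<Longrightarrow> Re (bf x y) > 0"
  shows "Re (bf (sum_list xs) y) > 0"
  using sum_list_strict_mono[of xs "\<lambda>_. 0" "\<lambda>x. Re (bf x y)"] assms
  by (simp add: Re_bf_sum_list_left)

lemma sum_list_split_off:
  "sum_list xs = sum_list (filter (\<lambda>x. x \<noteq> a) xs) + csm (of_nat (length (filter (\<lambda>x. x = a) xs))) a"
  by (induction xs) (auto simp: csm_add_left algebra_simps)

lemma word_map_Nil [simp]: "word_map [] = id"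
  unfolding word_map_def by simp

lemma word_map_Cons [simp]: "word_map (a # as) = refl a \<circ> word_map as"
  unfolding word_map_def by simp

lemma word_map_append: "word_map (xs @ ys) = word_map xs \<circ> word_map ys"
  by (induction xs) (auto simp: comp_assoc)

section \<open>Positive and simple roots\<close>

locale pos_root_system =
  fixes R :: "(complex^'n::finite) set" and \<gamma> :: "complex^'n"
  assumes simple_root_system: "simple_root_system R" and regular: "regular R \<gamma>"
begin

abbreviation "P \<equiv> pos_roots R \<gamma>"
abbreviation "S \<equiv> simple_roots R \<gamma>"
abbreviation "W \<equiv> weyl R"
abbreviation "\<rho> \<equiv> rho R \<gamma>"

lemmas root_system_axioms = simple_root_system[unfolded simple_root_system_def]

lemma finite_roots: "finite R"
  using root_system_axioms by (elim conjE) assumption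

lemma zero_not_root: "0 \<notin> R"
  using root_system_axioms by (elim conjE) assumption

lemma realv_root: "a \<in> R \<Longrightarrow> realv a"
  using root_system_axioms by (elim conjE) (rule bspec)

lemma roots_span_realv: "realv v \<Longrightarrow> \<exists>c::complex^'n \<Rightarrow> real. v = (\<Sum>a\<in>R. csm (of_real (c a)) a)"
  using root_system_axioms by (elim conjE) (erule allE, erule mp)

lemma refl_root: "a \<in> R \<Longrightarrow> b \<in> R \<Longrightarrow> refl a b \<in> R"
  using root_system_axioms by (elim conjE) (drule bspec, assumption, drule bspec, assumption, assumption)

lemma bf_coroot_Ints: "a \<in> R \<Longrightarrow> b \<in> R \<Longrightarrow> bf b (coroot a) \<in> \<int>"
  using root_system_axioms by (elim conjE) (drule bspec, assumption, drule bspec, assumption, assumption)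

lemma root_multiple: "a \<in> R \<Longrightarrow> csm (of_real c) a \<in> R \<Longrightarrow> c = 1 \<or> c = -1"
  using root_system_axioms by (elim conjE) (drule bspec, assumption, drule spec, erule mp, assumption)

lemma Re_bf_root_self_ge_2: "a \<in> R \<Longrightarrow> Re (bf a a) \<ge> 2"
  using root_system_axioms by (elim conjE) (erule bspec)

lemma roots_nonempty: "R \<noteq> {}"
  using root_system_axioms by (elim conjE) auto

lemma
  realv_\<gamma>: "realv \<gamma>" and
  bf_root_\<gamma>_nonzero: "a \<in> R \<Longrightarrow> bf a \<gamma> \<noteq> 0"
  using regular unfolding regular_def by blast+

lemma Re_bf_root_self_pos: "a \<in> R \<Longrightarrow> Re (bf a a) > 0"
  using Re_bf_root_self_ge_2[of a] by simp

lemma bf_root_self_nonzero: "a \<in> R \<Longrightarrow> bf a a \<noteq> 0"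
  using Re_bf_root_self_pos by force

lemma bf_root_eq_of_real_Re: "a \<in> R \<Longrightarrow> realv x \<Longrightarrow> bf a x = of_real (Re (bf a x))"
  using bf_eq_of_real_Re realv_root by blast

lemma bf_coroot_root_eq:
  assumes "a \<in> R" and "realv x"
  shows "bf x (coroot a) = of_real (2 * Re (bf a x) / Re (bf a a))"
  using bf_root_eq_of_real_Re[OF assms] bf_root_eq_of_real_Re[OF assms(1) realv_root[OF assms(1)]]
  by (metis bf_coroot bf_commute of_real_divide of_real_mult of_real_numeral)

lemma bf_coroot_root_of_int:
  assumes "a \<in> R" and "b \<in> R"
  obtains k :: int where "bf b (coroot a) = of_int k" "real_of_int k = 2 * Re (bf a b) / Re (bf a a)"
proof -
  obtain k :: int where k: "bf b (coroot a) = of_int k"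
    using bf_coroot_Ints[OF assms] by (auto elim: Ints_cases)
  then have "real_of_int k = 2 * Re (bf a b) / Re (bf a a)"
    using bf_coroot_root_eq[OF assms(1) realv_root[OF assms(2)]] by (metis of_real_eq_iff of_real_of_int_eq)
  with k show thesis by (rule that)
qed

lemma uminus_root: "a \<in> R \<Longrightarrow> - a \<in> R"
  using refl_root[of a a] refl_self[OF bf_root_self_nonzero] by simp

definition ht :: "complex^'n \<Rightarrow> real" where
  "ht a = Re (bf a \<gamma>)"

lemma ht_add [simp]: "ht (x + y) = ht x + ht y"
  and ht_minus [simp]: "ht (- x) = - ht x"
  and ht_diff [simp]: "ht (x - y) = ht x - ht y"
  unfolding ht_def by simp_all

lemma bf_root_\<gamma>_eq_ht: "a \<in> R \<Longrightarrow> bf a \<gamma> = of_real (ht a)"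
  unfolding ht_def using bf_root_eq_of_real_Re[OF _ realv_\<gamma>] .

lemma ht_root_nonzero: "a \<in> R \<Longrightarrow> ht a \<noteq> 0"
  using bf_root_\<gamma>_nonzero bf_root_\<gamma>_eq_ht by fastforce

lemma pos_root_iff: "a \<in> P \<longleftrightarrow> a \<in> R \<and> ht a > 0"
  unfolding pos_roots_def ht_def by auto

lemma finite_pos_roots: "finite P"
  using finite_roots unfolding pos_roots_def by auto

lemma pos_root_imp_root: "a \<in> P \<Longrightarrow> a \<in> R"
  and ht_pos_root: "a \<in> P \<Longrightarrow> ht a > 0"
  by (simp_all add: pos_root_iff)

lemma uminus_pos_root: "a \<in> P \<Longrightarrow> - a \<notin> P"
  by (simp add: pos_root_iff)

lemma root_cases: "a \<in> R \<Longrightarrow> a \<notin> P \<Longrightarrow> - a \<in> P"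
  using ht_root_nonzero[of a] uminus_root[of a] by (auto simp: pos_root_iff)

lemma simple_root_imp_pos_root: "a \<in> S \<Longrightarrow> a \<in> P"
  unfolding simple_roots_def by auto

lemma simple_root_imp_root: "a \<in> S \<Longrightarrow> a \<in> R"
  using simple_root_imp_pos_root pos_root_imp_root by blast

lemma simple_root_ne_add: "a \<in> S \<Longrightarrow> b \<in> P \<Longrightarrow> d \<in> P \<Longrightarrow> a \<noteq> b + d"
  unfolding simple_roots_def by auto

lemma pos_root_height_induct [consumes 1, case_names less]:
  assumes "b \<in> P"
    and "\<And>b. b \<in> P \<Longrightarrow> (\<And>b'. b' \<in> P \<Longrightarrow> ht b' < ht b \<Longrightarrow> Q b') \<Longrightarrow> Q b"
  shows "Q b"
  using assms(1)
proof (induction "card {d\<in>P. ht d < ht b}" arbitrary: b rule: less_induct)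
  case less
  show ?case
  proof (rule assms(2)[OF less.prems])
    fix b' assume "b' \<in> P" "ht b' < ht b"
    then have "card {d\<in>P. ht d < ht b'} < card {d\<in>P. ht d < ht b}"
      using finite_pos_roots by (intro psubset_card_mono) auto
    then show "Q b'" using less.hyps \<open>b' \<in> P\<close> by blast
  qed
qed

lemma pos_root_sum_simple_roots: "a \<in> P \<Longrightarrow> \<exists>xs. set xs \<subseteq> S \<and> a = sum_list xs"
proof (induction rule: pos_root_height_induct)
  case (less a)
  show ?case
  proof (cases "a \<in> S")
    case True
    then show ?thesis by (intro exI[of _ "[a]"]) simp
  next
    case False
    then obtain b d where bd: "b \<in> P" "d \<in> P" "a = b + d"
      using less.hyps unfolding simple_roots_def by blast
    then have "ht b < ht a" "ht d < ht a"
      using ht_pos_root by auto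
    then obtain xs ys where "set xs \<subseteq> S" "b = sum_list xs" "set ys \<subseteq> S" "d = sum_list ys"
      using less.IH bd by metis
    then show ?thesis using bd by (intro exI[of _ "xs @ ys"]) simp
  qed
qed

lemma Re_bf_pos_root_nonneg_if_dominant:
  assumes "\<And>a. a \<in> S \<Longrightarrow> Re (bf a y) \<ge> 0" and "b \<in> P"
  shows "Re (bf b y) \<ge> 0"
proof -
  obtain xs where "set xs \<subseteq> S" "b = sum_list xs"
    using pos_root_sum_simple_roots[OF assms(2)] by blast
  then show ?thesis
    using assms(1) by (auto simp: Re_bf_sum_list_left subset_iff intro!: sum_list_nonneg)
qed

lemma Re_bf_pos_root_pos_if_strictly_dominant:
  assumes "\<And>a. a \<in> S \<Longrightarrow> Re (bf a y) > 0" and "b \<in> P"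
  shows "Re (bf b y) > 0"
proof -
  obtain xs where xs: "set xs \<subseteq> S" "b = sum_list xs"
    using pos_root_sum_simple_roots[OF assms(2)] by blast
  moreover have "xs \<noteq> []"
    using xs assms(2) zero_not_root pos_root_imp_root by auto
  ultimately show ?thesis
    using assms(1) by (auto intro!: Re_bf_sum_list_pos)
qed

lemma root_diff_if_acute:
  assumes a: "a \<in> R" and b: "b \<in> R" and "a \<noteq> b" and acute: "Re (bf a b) > 0"
  shows "a - b \<in> R"
proof (cases "(Re (bf a b))\<^sup>2 \<ge> Re (bf a a) * Re (bf b b)")
  case True
  define t where "t = Re (bf a b) / Re (bf b b)"
  have ab: "a = csm (of_real t) b"
    unfolding t_def using True realv_root a b Re_bf_root_self_pos
    by (intro realv_collinear_if_bf_sq_ge) auto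
  then have "t = 1 \<or> t = -1"
    using root_multiple[OF b] a by metis
  moreover have "t > 0"
    unfolding t_def using acute Re_bf_root_self_pos[OF b] by simp
  ultimately have "a = b" using ab by auto
  with \<open>a \<noteq> b\<close> show ?thesis by contradiction
next
  case False
  obtain k1 :: int where k1: "bf a (coroot b) = of_int k1" "k1 = 2 * Re (bf b a) / Re (bf b b)"
    using bf_coroot_root_of_int[OF b a] .
  obtain k2 :: int where k2: "bf b (coroot a) = of_int k2" "k2 = 2 * Re (bf a b) / Re (bf a a)"
    using bf_coroot_root_of_int[OF a b] .
  have ba: "Re (bf b a) = Re (bf a b)" by (simp add: bf_commute)
  have "k1 > 0" "k2 > 0"
    using k1(2) k2(2) ba acute Re_bf_root_self_pos[OF a] Re_bf_root_self_pos[OF b]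
    by (metis divide_pos_pos mult_pos_pos zero_less_numeral of_int_0_less_iff)+
  moreover have "real_of_int (k1 * k2) * (Re (bf a a) * Re (bf b b)) = 4 * (Re (bf a b))\<^sup>2"
    using Re_bf_root_self_pos[OF a] Re_bf_root_self_pos[OF b]
    by (simp add: k1(2) k2(2) ba power2_eq_square)
  then have "real_of_int (k1 * k2) * (Re (bf a a) * Re (bf b b)) < 4 * (Re (bf a a) * Re (bf b b))"
    using False by simp
  then have "real_of_int (k1 * k2) < 4"
    using Re_bf_root_self_pos[OF a] Re_bf_root_self_pos[OF b] by simp
  then have "k1 * k2 < 4" by linarith
  moreover have "k1 * k2 \<ge> 4" if "k1 \<ge> 2" "k2 \<ge> 2"
    using mult_mono[OF that] that by simp
  ultimately have "k1 = 1 \<or> k2 = 1"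
    by linarith
  then show ?thesis
  proof
    assume "k1 = 1"
    then have "refl b a = a - b" unfolding refl_def using k1(1) by simp
    then show ?thesis using refl_root[OF b a] by simp
  next
    assume "k2 = 1"
    then have "refl a b = - (a - b)" unfolding refl_def using k2(1) by simp
    then show ?thesis using uminus_root[OF refl_root[OF a b]] by simp
  qed
qed

lemma simple_roots_obtuse:
  assumes a: "a \<in> S" and b: "b \<in> S" and "a \<noteq> b"
  shows "Re (bf a b) \<le> 0"
proof (rule ccontr)
  assume "\<not> ?thesis"
  then have "a - b \<in> R"
    using root_diff_if_acute simple_root_imp_root a b \<open>a \<noteq> b\<close> by simp
  then have "a - b \<in> P \<or> b - a \<in> P"
    using root_cases by fastforce
  then show False
    using simple_root_ne_add[OF a, of b "a - b"] simple_root_ne_add[OF b, of a "b - a"]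
      simple_root_imp_pos_root a b by auto
qed

lemma refl_simple_pos_root:
  assumes a: "a \<in> S" and b: "b \<in> P" and "b \<noteq> a"
  shows "refl a b \<in> P"
proof (rule ccontr)
  assume "refl a b \<notin> P"
  have aR: "a \<in> R" and bR: "b \<in> R"
    using a b simple_root_imp_root pos_root_imp_root by auto
  obtain k :: int where k: "bf b (coroot a) = of_int k"
    using bf_coroot_root_of_int[OF aR bR] by blast
  have "- refl a b \<in> P"
    using root_cases refl_root[OF aR bR] \<open>refl a b \<notin> P\<close> by blast
  then have "csm (of_int k) a - b \<in> P"
    unfolding refl_def k by simp
  then obtain ys where ys: "set ys \<subseteq> S" "csm (of_int k) a - b = sum_list ys"
    using pos_root_sum_simple_roots by blast
  obtain xs where xs: "set xs \<subseteq> S" "b = sum_list xs"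
    using pos_root_sum_simple_roots b by blast
  text \<open>Collecting the occurrences of \<open>a\<close> in \<open>xs @ ys\<close> writes a multiple of \<open>a\<close> as a sum
    of the other simple roots, which is impossible since those are obtuse to \<open>a\<close>.\<close>
  define zs where "zs = filter (\<lambda>x. x \<noteq> a) (xs @ ys)"
  define m where "m = length (filter (\<lambda>x. x = a) (xs @ ys))"
  have "sum_list (xs @ ys) = b + (csm (of_int k) a - b)"
    using xs ys by simp
  then have "sum_list (xs @ ys) = csm (of_int k) a"
    by simp
  then have zs_sum: "sum_list zs = csm (of_int (k - int m)) a"
    using sum_list_split_off[of "xs @ ys" a] unfolding zs_def m_def
    by (simp add: csm_diff_left eq_diff_eq)
  have zsS: "set zs \<subseteq> S - {a}"
    using xs ys unfolding zs_def by auto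
  show False
  proof (cases "zs = []")
    case True
    then have no_other: "filter (\<lambda>x. x \<noteq> a) xs = []" unfolding zs_def by simp
    define n where "n = real (length (filter (\<lambda>x. x = a) xs))"
    have "b = csm (of_real n) a"
      using sum_list_split_off[of xs a] xs no_other unfolding n_def by simp
    moreover have "n = 1"
      using root_multiple[OF aR] bR calculation unfolding n_def by fastforce
    ultimately have "b = a"
      by simp
    with \<open>b \<noteq> a\<close> show False by contradiction
  next
    case False
    have "Re (bf (sum_list zs) \<gamma>) > 0"
      using False zsS ht_pos_root simple_root_imp_pos_root
      by (intro Re_bf_sum_list_pos) (auto simp: ht_def)
    then have "k - int m > 0"
      using zs_sum ht_pos_root[OF simple_root_imp_pos_root[OF a]]
      by (simp add: ht_def zero_less_mult_iff)
    moreover have "Re (bf (sum_list zs) a) \<le> 0"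
      using zsS simple_roots_obtuse[OF _ a]
      by (auto simp: Re_bf_sum_list_left subset_iff intro!: sum_list_nonpos)
    ultimately show False
      using zs_sum Re_bf_root_self_pos[OF aR] by (simp add: mult_le_0_iff)
  qed
qed

section \<open>The Weyl group and its sign character\<close>

lemma csm_linear_weyl: "w \<in> W \<Longrightarrow> csm_linear w"
proof (induction rule: weyl.induct)
  case weyl_id
  show ?case by (rule csm_linear_id)
next
  case (weyl_step w a)
  show ?case by (rule csm_linear_comp[OF csm_linear_refl weyl_step.IH])
qed

lemma bf_weyl_weyl: "w \<in> W \<Longrightarrow> bf (w x) (w y) = bf x y"
  by (induction arbitrary: x y rule: weyl.induct) (auto simp: bf_refl_refl bf_root_self_nonzero)

lemma weyl_root: "w \<in> W \<Longrightarrow> a \<in> R \<Longrightarrow> w a \<in> R"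
  by (induction rule: weyl.induct) (auto intro: refl_root)

lemma realv_weyl: "w \<in> W \<Longrightarrow> realv x \<Longrightarrow> realv (w x)"
  by (induction rule: weyl.induct) (auto intro: realv_refl realv_root)

lemma refl_in_weyl: "a \<in> R \<Longrightarrow> refl a \<in> W"
  using weyl_step[OF weyl_id, of a R] by simp

lemma weyl_comp:
  assumes "u \<in> W" "v \<in> W"
  shows "u \<circ> v \<in> W"
  using assms(1)
proof (induction rule: weyl.induct)
  case weyl_id
  then show ?case using assms(2) by simp
next
  case (weyl_step w a)
  then show ?case using weyl.weyl_step[OF weyl_step.IH weyl_step.hyps(2)] by (simp only: comp_assoc)
qed

lemma weyl_inverse: "w \<in> W \<Longrightarrow> \<exists>v\<in>W. (\<forall>x. v (w x) = x) \<and> (\<forall>x. w (v x) = x)"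
proof (induction rule: weyl.induct)
  case weyl_id
  then show ?case by (intro bexI[of _ id]) (auto intro: weyl.weyl_id)
next
  case (weyl_step w a)
  then obtain v where "v \<in> W" "\<forall>x. v (w x) = x" "\<forall>x. w (v x) = x" by blast
  then show ?case
    using weyl_step.hyps(2)
    by (intro bexI[of _ "v \<circ> refl a"])
      (auto simp: refl_refl bf_root_self_nonzero weyl_comp refl_in_weyl)
qed

lemma weyl_inj:
  assumes "w \<in> W" "w x = w y"
  shows "x = y"
proof -
  obtain v where "\<forall>x. v (w x) = x"
    using weyl_inverse[OF assms(1)] by blast
  then show ?thesis
    using assms(2) by metis
qed

lemma roots_span: "\<exists>c::complex^'n \<Rightarrow> complex. x = (\<Sum>a\<in>R. csm (c a) a)"
proof -
  define x_re :: "complex^'n" where "x_re = (\<chi> i. of_real (Re (x$i)))"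
  define x_im :: "complex^'n" where "x_im = (\<chi> i. of_real (Im (x$i)))"
  have "realv x_re" "realv x_im"
    unfolding x_re_def x_im_def realv_def by auto
  obtain c where c: "x_re = (\<Sum>a\<in>R. csm (of_real (c a)) a)"
    using roots_span_realv[OF \<open>realv x_re\<close>] by blast
  obtain d where d: "x_im = (\<Sum>a\<in>R. csm (of_real (d a)) a)"
    using roots_span_realv[OF \<open>realv x_im\<close>] by blast
  have "x = x_re + csm \<i> x_im"
    unfolding x_re_def x_im_def by (simp add: vec_eq_iff complex_eq_iff)
  also have "\<dots> = (\<Sum>a\<in>R. csm (of_real (c a) + \<i> * of_real (d a)) a)"
    unfolding c d by (simp add: csm_sum csm_add_left sum.distrib)
  finally show ?thesis
    by (rule exI[where x = "\<lambda>a. of_real (c a) + \<i> * of_real (d a)"])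
qed

lemma weyl_eqI:
  assumes "u \<in> W" "v \<in> W" and "\<And>a. a \<in> R \<Longrightarrow> u a = v a"
  shows "u = v"
proof
  fix x
  obtain c where "x = (\<Sum>a\<in>R. csm (c a) a)"
    using roots_span by blast
  then show "u x = v x"
    using csm_linear_weyl[OF assms(1)] csm_linear_weyl[OF assms(2)] assms(3)
    by (simp add: csm_linear_sum csm_linear_csm)
qed

lemma finite_weyl: "finite W"
proof (rule inj_on_finite[of "\<lambda>w. restrict w R" W "R \<rightarrow>\<^sub>E R"])
  show "inj_on (\<lambda>w. restrict w R) W"
    by (rule inj_onI) (metis weyl_eqI restrict_apply')
  show "(\<lambda>w. restrict w R) ` W \<subseteq> R \<rightarrow>\<^sub>E R"
    using weyl_root by auto
  show "finite (R \<rightarrow>\<^sub>E R)"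
    using finite_roots by (intro finite_PiE) auto
qed

lemma bij_betw_weyl_comp_left: "w \<in> W \<Longrightarrow> bij_betw ((\<circ>) w) W W"
proof -
  assume w: "w \<in> W"
  then obtain v where v: "v \<in> W" "\<forall>x. v (w x) = x" "\<forall>x. w (v x) = x"
    using weyl_inverse by blast
  show ?thesis
  proof (rule bij_betwI[where g = "(\<circ>) v"])
    show "(\<circ>) w \<in> W \<rightarrow> W" "(\<circ>) v \<in> W \<rightarrow> W"
      using weyl_comp w v(1) by auto
  qed (simp_all add: comp_def v)
qed

definition pos_image :: "(complex^'n \<Rightarrow> complex^'n) \<Rightarrow> complex^'n \<Rightarrow> complex^'n" where
  "pos_image w a = (if w a \<in> P then w a else - w a)"

lemma bij_betw_pos_image:
  assumes "w \<in> W"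
  shows "bij_betw (pos_image w) P P"
proof -
  have "inj_on (pos_image w) P"
  proof (rule inj_onI)
    fix a b assume "a \<in> P" "b \<in> P" "pos_image w a = pos_image w b"
    then have "w a = w b \<or> w a = w (- b)"
      unfolding pos_image_def csm_linear_minus[OF csm_linear_weyl[OF assms]]
      by (auto split: if_splits simp: minus_equation_iff[of "w a"])
    then have "a = b \<or> a = - b"
      using weyl_inj[OF assms] by blast
    then show "a = b"
      using uminus_pos_root \<open>a \<in> P\<close> \<open>b \<in> P\<close> by blast
  qed
  moreover have "pos_image w ` P \<subseteq> P"
    unfolding pos_image_def using root_cases weyl_root[OF assms] pos_root_imp_root by auto
  ultimately show ?thesis
    unfolding bij_betw_def using endo_inj_surj[OF finite_pos_roots] by blast
qed

text \<open>This is \<open>(-1)\<^sup>l\<^sup>(\<^sup>w\<^sup>)\<close> (see \<open>neg_one_power_wlen\<close>); it is multiplicative because it is the factor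
  by which \<open>w\<close> scales every odd product over the positive roots.\<close>
definition wsign :: "(complex^'n \<Rightarrow> complex^'n) \<Rightarrow> complex" where
  "wsign w = (-1) ^ card {a\<in>P. w a \<notin> P}"

lemma prod_pos_roots_weyl:
  assumes w: "w \<in> W" and odd: "\<And>x. F (- x) = - F x"
  shows "(\<Prod>a\<in>P. F (w a)) = wsign w * (\<Prod>a\<in>P. F a)"
proof -
  have "(\<Prod>a\<in>P. F (w a)) = (\<Prod>a\<in>P. (if w a \<in> P then 1 else -1) * F (pos_image w a))"
    by (rule prod.cong) (auto simp: pos_image_def odd)
  also have "\<dots> = (\<Prod>a\<in>P. (if w a \<in> P then 1 else -1)) * (\<Prod>a\<in>P. F (pos_image w a))"
    by (rule prod.distrib)
  also have "(\<Prod>a\<in>P. F (pos_image w a)) = (\<Prod>a\<in>P. F a)"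
    using prod.reindex_bij_betw[OF bij_betw_pos_image[OF w]] .
  also have "(\<Prod>a\<in>P. (if w a \<in> P then 1 else -1 :: complex)) = (\<Prod>a\<in>{a\<in>P. w a \<notin> P}. -1)"
    by (rule prod.mono_neutral_cong_right) (use finite_pos_roots in auto)
  finally show ?thesis
    unfolding wsign_def by simp
qed

lemma prod_bf_pos_roots_\<gamma>_nonzero: "(\<Prod>a\<in>P. bf a \<gamma>) \<noteq> 0"
  using finite_pos_roots bf_root_\<gamma>_nonzero pos_root_imp_root by auto

lemma wsign_comp:
  assumes u: "u \<in> W" and v: "v \<in> W"
  shows "wsign (u \<circ> v) = wsign u * wsign v"
proof -
  have "wsign (u \<circ> v) * (\<Prod>a\<in>P. bf a \<gamma>) = (\<Prod>a\<in>P. bf (u (v a)) \<gamma>)"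
    using prod_pos_roots_weyl[OF weyl_comp[OF u v], of "\<lambda>x. bf x \<gamma>"] by simp
  also have "\<dots> = wsign v * (\<Prod>a\<in>P. bf (u a) \<gamma>)"
    using csm_linear_minus[OF csm_linear_weyl[OF u]]
    by (intro prod_pos_roots_weyl[OF v, of "\<lambda>x. bf (u x) \<gamma>"]) simp
  also have "\<dots> = wsign v * (wsign u * (\<Prod>a\<in>P. bf a \<gamma>))"
    using prod_pos_roots_weyl[OF u, of "\<lambda>x. bf x \<gamma>"] by simp
  finally show ?thesis
    using prod_bf_pos_roots_\<gamma>_nonzero by (simp add: mult.commute)
qed

lemma wsign_cases: "wsign w = 1 \<or> wsign w = -1"
  unfolding wsign_def by (metis neg_one_even_power neg_one_odd_power)

lemma wsign_mult_self: "wsign w * wsign w = 1"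
  using wsign_cases[of w] by auto

lemma wsign_id: "wsign id = 1"
  unfolding wsign_def by simp

lemma wsign_inverse:
  assumes "u \<in> W" "v \<in> W" "\<And>x. v (u x) = x"
  shows "wsign v = wsign u"
proof -
  have "v \<circ> u = id"
    using assms(3) by auto
  then have "wsign v * wsign u = 1"
    using wsign_comp[OF assms(2,1)] wsign_id by simp
  then show ?thesis
    using wsign_cases[of u] wsign_cases[of v] by auto
qed

lemma wsign_refl_simple:
  assumes "a \<in> S"
  shows "wsign (refl a) = -1"
proof -
  have "{b\<in>P. refl a b \<notin> P} = {a}"
    using refl_simple_pos_root[OF assms] refl_self[OF bf_root_self_nonzero]
      uminus_pos_root simple_root_imp_pos_root simple_root_imp_root assms by auto
  then show ?thesis
    unfolding wsign_def by simp
qed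

lemma word_map_weyl: "set as \<subseteq> R \<Longrightarrow> word_map as \<in> W"
  by (induction as) (auto intro: weyl.intros)

lemma wsign_word_map: "set as \<subseteq> S \<Longrightarrow> wsign (word_map as) = (-1) ^ length as"
proof (induction as)
  case Nil
  then show ?case by (simp add: wsign_def)
next
  case (Cons a as)
  have "wsign (word_map (a # as)) = wsign (refl a) * wsign (word_map as)"
    using wsign_comp[OF refl_in_weyl word_map_weyl] Cons.prems simple_root_imp_root by auto
  also have "\<dots> = (-1) ^ length (a # as)"
    using Cons wsign_refl_simple by simp
  finally show ?case .
qed

lemma exists_simple_root_lowering_ht:
  assumes b: "b \<in> P" and "b \<notin> S"
  obtains a where "a \<in> S" "refl a b \<in> P" "ht (refl a b) < ht b"
proof -
  have bR: "b \<in> R" using b pos_root_imp_root by blast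
  obtain xs where xs: "set xs \<subseteq> S" "b = sum_list xs"
    using pos_root_sum_simple_roots b by blast
  have "\<not> (\<Sum>x\<leftarrow>xs. Re (bf x b)) \<le> 0"
    using Re_bf_root_self_pos[OF bR] xs(2) Re_bf_sum_list_left[of xs b] by simp
  then obtain a where "a \<in> set xs" and acute: "Re (bf a b) > 0"
    using sum_list_nonpos[of "map (\<lambda>x. Re (bf x b)) xs"] by force
  then have a: "a \<in> S" using xs by blast
  then have aR: "a \<in> R" by (rule simple_root_imp_root)
  have "ht (refl a b) = ht b - Re (bf b (coroot a) * bf a \<gamma>)"
    unfolding refl_def ht_def by simp
  also have "\<dots> = ht b - 2 * Re (bf a b) / Re (bf a a) * ht a"
    unfolding bf_coroot_root_eq[OF aR realv_root[OF bR]] ht_def by simp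
  finally have "ht (refl a b) = ht b - 2 * Re (bf a b) / Re (bf a a) * ht a" .
  moreover have "2 * Re (bf a b) / Re (bf a a) * ht a > 0"
    using acute Re_bf_root_self_pos[OF aR] ht_pos_root[OF simple_root_imp_pos_root[OF a]] by simp
  ultimately show thesis
    using that a refl_simple_pos_root[OF a b] \<open>b \<notin> S\<close> by force
qed

lemma refl_root_induct [consumes 1, case_names simple conj]:
  assumes "b \<in> R"
    and simple: "\<And>a. a \<in> S \<Longrightarrow> Q (refl a)"
    and conj: "\<And>a f. a \<in> S \<Longrightarrow> Q f \<Longrightarrow> Q (refl a \<circ> f \<circ> refl a)"
  shows "Q (refl b)"
proof -
  have pos: "Q (refl b)" if "b \<in> P" for b
    using that
  proof (induction rule: pos_root_height_induct)
    case (less b)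
    show ?case
    proof (cases "b \<in> S")
      case True
      then show ?thesis by (rule simple)
    next
      case False
      then obtain a where a: "a \<in> S" "refl a b \<in> P" "ht (refl a b) < ht b"
        using exists_simple_root_lowering_ht less.hyps by blast
      have aa: "bf a a \<noteq> 0"
        using a(1) simple_root_imp_root bf_root_self_nonzero by blast
      have "refl b = refl a \<circ> refl (refl a b) \<circ> refl a"
        by (simp add: refl_refl_conj[OF aa] fun_eq_iff refl_refl[OF aa])
      then show ?thesis
        using conj[OF a(1) less.IH[OF a(2,3)]] by (simp only:)
    qed
  qed
  show ?thesis
  proof (cases "b \<in> P")
    case True
    then show ?thesis by (rule pos)
  next
    case False
    then show ?thesis
      using pos[OF root_cases[OF assms(1) False]] by (simp add: refl_uminus)
  qed
qed

lemma refl_eq_word_map: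
  assumes "b \<in> R"
  obtains as where "set as \<subseteq> S" "refl b = word_map as"
proof -
  have "\<exists>as. set as \<subseteq> S \<and> refl b = word_map as"
    using assms
  proof (induction rule: refl_root_induct)
    case (simple a)
    then show ?case by (intro exI[of _ "[a]"]) simp
  next
    case (conj a f)
    then obtain as where "set as \<subseteq> S" "f = word_map as" by blast
    then show ?case
      using conj.hyps by (intro exI[of _ "[a] @ as @ [a]"]) (simp add: word_map_append comp_assoc)
  qed
  then show thesis using that by blast
qed

lemma wsign_refl:
  assumes "b \<in> R"
  shows "wsign (refl b) = -1"
proof -
  have "refl b \<in> W \<and> wsign (refl b) = -1"
    using assms
  proof (induction rule: refl_root_induct)
    case (simple a)
    then show ?case
      using refl_in_weyl simple_root_imp_root wsign_refl_simple by blast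
  next
    case (conj a f)
    have a: "refl a \<in> W" "wsign (refl a) = -1"
      using conj.hyps refl_in_weyl simple_root_imp_root wsign_refl_simple by blast+
    have af: "refl a \<circ> f \<in> W"
      using weyl_comp a(1) conj.IH by blast
    have "wsign (refl a \<circ> f \<circ> refl a) = wsign (refl a) * wsign f * wsign (refl a)"
      using wsign_comp[OF af a(1)] wsign_comp[OF a(1)] conj.IH by simp
    then have "wsign (refl a \<circ> f \<circ> refl a) = -1"
      using a(2) conj.IH by simp
    then show ?case
      using weyl_comp[OF af a(1)] by blast
  qed
  then show ?thesis by blast
qed

lemma weyl_eq_word_map:
  assumes "w \<in> W"
  obtains as where "set as \<subseteq> S" "w = word_map as"
proof -
  have "\<exists>as. set as \<subseteq> S \<and> w = word_map as"
    using assms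
  proof (induction rule: weyl.induct)
    case weyl_id
    then show ?case by (intro exI[of _ "[]"]) simp
  next
    case (weyl_step w a)
    then obtain as bs where "set as \<subseteq> S" "w = word_map as" "set bs \<subseteq> S" "refl a = word_map bs"
      using refl_eq_word_map by metis
    then show ?case by (intro exI[of _ "bs @ as"]) (simp add: word_map_append)
  qed
  then show thesis using that by blast
qed

lemma neg_one_power_wlen:
  assumes "w \<in> W"
  shows "(-1::complex) ^ wlen R \<gamma> w = wsign w"
proof -
  let ?Q = "\<lambda>k. \<exists>as. length as = k \<and> set as \<subseteq> S \<and> w = word_map as"
  have "\<exists>k. ?Q k"
    using weyl_eq_word_map[OF assms] by blast
  then have "?Q (Least ?Q)"
    by (rule LeastI_ex)
  then show ?thesis
    unfolding wlen_def using wsign_word_map by auto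
qed

section \<open>The half sum of positive roots\<close>

lemma realv_rho: "realv \<rho>"
  unfolding rho_def using pos_root_imp_root realv_root by (intro realv_csm realv_sum) auto

lemma refl_simple_permutes_pos_roots:
  assumes a: "a \<in> S"
  shows "bij_betw (refl a) (P - {a}) (P - {a})"
proof -
  have aa: "bf a a \<noteq> 0"
    using a simple_root_imp_root bf_root_self_nonzero by blast
  have "refl a b \<noteq> a" if "b \<in> P" for b
  proof
    assume "refl a b = a"
    then have "b = - a"
      using refl_refl[OF aa, of b] refl_self[OF aa] by simp
    then show False
      using that uminus_pos_root simple_root_imp_pos_root[OF a] by blast
  qed
  then have "refl a ` (P - {a}) \<subseteq> P - {a}"
    using refl_simple_pos_root[OF a] by auto
  moreover have "inj_on (refl a) (P - {a})"
    by (rule inj_onI) (metis refl_refl[OF aa])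
  ultimately show ?thesis
    unfolding bij_betw_def using endo_inj_surj[of "P - {a}" "refl a"] finite_pos_roots by blast
qed

lemma refl_simple_rho:
  assumes a: "a \<in> S"
  shows "refl a \<rho> = \<rho> - a"
proof -
  have aa: "bf a a \<noteq> 0" and aP: "a \<in> P"
    using a simple_root_imp_root bf_root_self_nonzero simple_root_imp_pos_root by blast+
  have "refl a (\<Sum>b\<in>P. b) = (\<Sum>b\<in>P. refl a b)"
    by (rule csm_linear_sum[OF csm_linear_refl])
  also have "\<dots> = refl a a + (\<Sum>b\<in>P - {a}. refl a b)"
    using sum.remove[OF finite_pos_roots aP] .
  also have "(\<Sum>b\<in>P - {a}. refl a b) = (\<Sum>b\<in>P - {a}. b)"
    using sum.reindex_bij_betw[OF refl_simple_permutes_pos_roots[OF a], of id] by simp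
  also have "refl a a + (\<Sum>b\<in>P - {a}. b) = (\<Sum>b\<in>P. b) - csm 2 a"
    using sum.remove[OF finite_pos_roots aP, of id] refl_self[OF aa] by (simp add: csm_two)
  finally show ?thesis
    unfolding rho_def by (simp add: csm_linear_csm[OF csm_linear_refl])
qed

lemma bf_rho_coroot_simple:
  assumes a: "a \<in> S"
  shows "bf \<rho> (coroot a) = 1"
proof -
  have "csm (bf \<rho> (coroot a)) a = a"
    using refl_simple_rho[OF a] unfolding refl_def by simp
  then show ?thesis
    using csm_eq_self_imp_one zero_not_root simple_root_imp_root[OF a] by metis
qed

lemma bf_simple_rho:
  assumes a: "a \<in> S"
  shows "bf a \<rho> = bf a a / 2"
proof -
  have "bf \<rho> (coroot a) = 1"
    by (rule bf_rho_coroot_simple[OF a])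
  then show ?thesis
    using bf_root_self_nonzero[OF simple_root_imp_root[OF a]]
    by (simp add: bf_coroot bf_commute[of \<rho> a] field_simps)
qed

lemma Re_bf_simple_rho_pos: "a \<in> S \<Longrightarrow> Re (bf a \<rho>) > 0"
  using Re_bf_root_self_pos[OF simple_root_imp_root] by (simp add: bf_simple_rho)

lemma Re_bf_pos_root_rho_pos: "b \<in> P \<Longrightarrow> Re (bf b \<rho>) > 0"
  by (rule Re_bf_pos_root_pos_if_strictly_dominant[OF Re_bf_simple_rho_pos])

end

section \<open>The Weyl denominator formula\<close>

definition exp_diff :: "real \<Rightarrow> complex \<Rightarrow> complex" where
  "exp_diff L z = exp (z * of_real L / 2) - exp (- (z * of_real L / 2))"

lemma exp_diff_minus: "exp_diff L (- z) = - exp_diff L z"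
  unfolding exp_diff_def by simp

lemma exp_diff_of_real_nonzero:
  assumes "t \<noteq> 0" and "L \<noteq> 0"
  shows "exp_diff L (of_real t) \<noteq> 0"
proof
  assume "exp_diff L (of_real t) = 0"
  then have "of_real (exp (t * L / 2)) = (of_real (exp (- (t * L / 2))) :: complex)"
    unfolding exp_diff_def by (simp add: exp_of_real[symmetric])
  then have "exp (t * L / 2) = exp (- (t * L / 2))"
    by (simp only: of_real_eq_iff)
  then show False
    using assms by simp
qed

context pos_root_system
begin

definition alt_sum :: "real \<Rightarrow> complex^'n \<Rightarrow> complex^'n \<Rightarrow> complex" where
  "alt_sum L \<mu> v = (\<Sum>u\<in>W. wsign u * exp (bf \<mu> (u v) * of_real L))"

definition weyl_denom :: "real \<Rightarrow> complex^'n \<Rightarrow> complex" where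
  "weyl_denom L v = (\<Prod>a\<in>P. exp_diff L (bf a v))"

definition signed_half_sum :: "(complex^'n \<Rightarrow> complex) \<Rightarrow> complex^'n" where
  "signed_half_sum e = (\<Sum>a\<in>P. csm (e a / 2) a)"

definition sign_fun :: "(complex^'n \<Rightarrow> complex) \<Rightarrow> bool" where
  "sign_fun e \<longleftrightarrow> (\<forall>a\<in>P. e a = 1 \<or> e a = -1)"

lemma alt_sum_weyl:
  assumes w: "w \<in> W"
  shows "alt_sum L (w \<mu>) v = wsign w * alt_sum L \<mu> v"
proof -
  obtain i where i: "i \<in> W" "\<forall>x. i (w x) = x" "\<forall>x. w (i x) = x"
    using weyl_inverse[OF w] by blast
  have bf_w: "bf (w \<mu>) y = bf \<mu> (i y)" for y
    using bf_weyl_weyl[OF w, of \<mu> "i y"] i by simp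
  have "alt_sum L (w \<mu>) v = (\<Sum>u\<in>W. wsign u * exp (bf \<mu> (i (u v)) * of_real L))"
    unfolding alt_sum_def bf_w ..
  also have "\<dots> = (\<Sum>u\<in>W. wsign (w \<circ> u) * exp (bf \<mu> (i ((w \<circ> u) v)) * of_real L))"
    using sum.reindex_bij_betw[OF bij_betw_weyl_comp_left[OF w],
        of "\<lambda>u. wsign u * exp (bf \<mu> (i (u v)) * of_real L)"] by simp
  also have "\<dots> = (\<Sum>u\<in>W. wsign w * (wsign u * exp (bf \<mu> (u v) * of_real L)))"
    by (rule sum.cong) (auto simp: wsign_comp[OF w] i)
  finally show ?thesis
    unfolding alt_sum_def by (simp add: sum_distrib_left)
qed

lemma alt_sum_eq_0_if_orth_root:
  assumes "b \<in> R" and "bf \<mu> b = 0"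
  shows "alt_sum L \<mu> v = 0"
proof -
  have "alt_sum L \<mu> v = - alt_sum L \<mu> v"
    using alt_sum_weyl[OF refl_in_weyl[OF assms(1)], of L \<mu> v]
    by (simp add: refl_fixes_orth[OF assms(2)] wsign_refl[OF assms(1)])
  then show ?thesis by simp
qed

lemma weyl_denom_weyl:
  assumes u: "u \<in> W"
  shows "weyl_denom L (u v) = wsign u * weyl_denom L v"
proof -
  obtain i where i: "i \<in> W" "\<forall>x. i (u x) = x" "\<forall>x. u (i x) = x"
    using weyl_inverse[OF u] by blast
  have "weyl_denom L (u v) = (\<Prod>a\<in>P. exp_diff L (bf (i a) v))"
    unfolding weyl_denom_def using bf_weyl_weyl[OF u] i by (metis (no_types, lifting))
  also have "\<dots> = wsign i * weyl_denom L v"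
    unfolding weyl_denom_def using csm_linear_minus[OF csm_linear_weyl[OF i(1)]]
    by (intro prod_pos_roots_weyl[OF i(1)]) (simp add: exp_diff_minus)
  finally show ?thesis
    using wsign_inverse[OF u i(1)] i by simp
qed

lemma weyl_denom_antisymmetrize:
  "weyl_denom L v = (1 / of_nat (card W)) * (\<Sum>u\<in>W. wsign u * weyl_denom L (u v))"
proof -
  have "(\<Sum>u\<in>W. wsign u * weyl_denom L (u v)) = of_nat (card W) * weyl_denom L v"
    by (simp add: weyl_denom_weyl mult.assoc[symmetric] wsign_mult_self)
  moreover have "card W \<noteq> 0"
    using finite_weyl weyl.weyl_id by (auto simp: card_eq_0_iff)
  ultimately show ?thesis by simp
qed

lemma weyl_denom_expand:
  "weyl_denom L v = (\<Sum>X\<in>Pow P. (-1) ^ card X *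
     exp (bf (signed_half_sum (\<lambda>a. if a \<in> X then -1 else 1)) v * of_real L))"
proof -
  define x where "x a = bf a v * of_real L / 2" for a
  have "weyl_denom L v = (\<Prod>a\<in>P. - exp (- x a) + exp (x a))"
    unfolding weyl_denom_def exp_diff_def x_def by (simp add: mult.assoc)
  also have "\<dots> = (\<Sum>X\<in>Pow P. (\<Prod>a\<in>X. - exp (- x a)) * (\<Prod>a\<in>P - X. exp (x a)))"
    by (rule prod_add[OF finite_pos_roots])
  also have "\<dots> = (\<Sum>X\<in>Pow P. (-1) ^ card X *
      exp (bf (signed_half_sum (\<lambda>a. if a \<in> X then -1 else 1)) v * of_real L))"
  proof (rule sum.cong[OF refl])
    fix X assume "X \<in> Pow P"
    then have X: "X \<subseteq> P" "finite X"
      using finite_pos_roots finite_subset by auto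
    have "(\<Prod>a\<in>X. - exp (- x a)) = (-1) ^ card X * exp (\<Sum>a\<in>X. - x a)"
      using X(2) by (simp add: prod_uminus exp_sum)
    moreover have "(\<Prod>a\<in>P - X. exp (x a)) = exp (\<Sum>a\<in>P - X. x a)"
      using finite_pos_roots by (simp add: exp_sum)
    moreover have "(\<Sum>a\<in>X. - x a) + (\<Sum>a\<in>P - X. x a)
        = bf (signed_half_sum (\<lambda>a. if a \<in> X then -1 else 1)) v * of_real L"
    proof -
      have "P \<inter> X = X" "P \<inter> - X = P - X"
        using X(1) by auto
      then have "(\<Sum>a\<in>X. - x a) + (\<Sum>a\<in>P - X. x a) = (\<Sum>a\<in>P. if a \<in> X then - x a else x a)"
        using sum.If_cases[OF finite_pos_roots, of "\<lambda>a. a \<in> X" "\<lambda>a. - x a" x] by simp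
      also have "\<dots> = (\<Sum>a\<in>P. (if a \<in> X then -1 else 1) * x a)"
        by (rule sum.cong) auto
      finally have "(\<Sum>a\<in>X. - x a) + (\<Sum>a\<in>P - X. x a) = (\<Sum>a\<in>P. (if a \<in> X then -1 else 1) * x a)" .
      then show ?thesis
        unfolding signed_half_sum_def bf_sum_left x_def
        by (simp add: sum_distrib_right mult.assoc)
    qed
    ultimately show "(\<Prod>a\<in>X. - exp (- x a)) * (\<Prod>a\<in>P - X. exp (x a)) = (-1) ^ card X *
      exp (bf (signed_half_sum (\<lambda>a. if a \<in> X then -1 else 1)) v * of_real L)"
      by (simp add: exp_add[symmetric])
  qed
  finally show ?thesis .
qed

lemma weyl_denom_eq_sum_alt_sum:
  "weyl_denom L v = (1 / of_nat (card W)) * (\<Sum>X\<in>Pow P. (-1) ^ card X *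
     alt_sum L (signed_half_sum (\<lambda>a. if a \<in> X then -1 else 1)) v)"
proof -
  let ?e = "\<lambda>X a. if a \<in> X then -1 else 1"
  have "(\<Sum>u\<in>W. wsign u * weyl_denom L (u v)) = (\<Sum>u\<in>W. \<Sum>X\<in>Pow P.
      wsign u * ((-1) ^ card X * exp (bf (signed_half_sum (?e X)) (u v) * of_real L)))"
    unfolding weyl_denom_expand by (simp add: sum_distrib_left)
  also have "\<dots> = (\<Sum>X\<in>Pow P. \<Sum>u\<in>W.
      wsign u * ((-1) ^ card X * exp (bf (signed_half_sum (?e X)) (u v) * of_real L)))"
    by (rule sum.swap)
  also have "\<dots> = (\<Sum>X\<in>Pow P. (-1) ^ card X * alt_sum L (signed_half_sum (?e X)) v)"
    unfolding alt_sum_def by (simp add: sum_distrib_left mult.left_commute)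
  finally show ?thesis
    using weyl_denom_antisymmetrize[of L v] by simp
qed

lemma realv_signed_half_sum: "sign_fun e \<Longrightarrow> realv (signed_half_sum e)"
  unfolding signed_half_sum_def sign_fun_def using pos_root_imp_root realv_root
  by (intro realv_sum realv_csm) auto

lemma weyl_signed_half_sum:
  assumes w: "w \<in> W" and e: "sign_fun e"
  obtains e' where "sign_fun e'" "w (signed_half_sum e) = signed_half_sum e'"
proof -
  define s where "s a = (if w a \<in> P then 1 else -1 :: complex)" for a
  define inv where "inv = the_inv_into P (pos_image w)"
  define e' where "e' b = e (inv b) * s (inv b)" for b
  have bij: "bij_betw (pos_image w) P P"
    by (rule bij_betw_pos_image[OF w])
  have inv: "inv (pos_image w a) = a" if "a \<in> P" for a
    unfolding inv_def using the_inv_into_f_f[OF bij_betw_imp_inj_on[OF bij] that] .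
  have inv_pos: "inv b \<in> P" if "b \<in> P" for b
    unfolding inv_def using that bij the_inv_into_into[OF bij_betw_imp_inj_on[OF bij]]
    by (metis bij_betw_imp_surj_on order_refl)
  have w_pos_image: "w a = csm (s a) (pos_image w a)" for a
    unfolding s_def pos_image_def by simp
  have "w (signed_half_sum e) = (\<Sum>a\<in>P. csm (e a / 2) (w a))"
    unfolding signed_half_sum_def csm_linear_sum[OF csm_linear_weyl[OF w]]
    by (simp add: csm_linear_csm[OF csm_linear_weyl[OF w]])
  also have "\<dots> = (\<Sum>a\<in>P. csm (e' (pos_image w a) / 2) (pos_image w a))"
    by (rule sum.cong) (auto simp: w_pos_image e'_def inv mult.commute)
  also have "\<dots> = signed_half_sum e'"
    unfolding signed_half_sum_def by (rule sum.reindex_bij_betw[OF bij])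
  finally have "w (signed_half_sum e) = signed_half_sum e'" .
  moreover have "sign_fun e'"
    using e inv_pos unfolding sign_fun_def e'_def s_def by fastforce
  ultimately show thesis by (intro that)
qed

lemma rho_minus_signed_half_sum:
  "\<rho> - signed_half_sum e = (\<Sum>b\<in>P. csm ((1 - e b) / 2) b)"
  unfolding rho_def signed_half_sum_def csm_sum sum_subtractf[symmetric]
  by (rule sum.cong) (auto simp: csm_diff_left[symmetric] diff_divide_distrib)

text \<open>The coefficients of \<open>\<rho> - \<mu>\<close> lie in \<open>{0, 1}\<close>, so \<open>\<mu>\<close> pairs integrally with simple coroots;
  strict dominance then forces \<open>(\<mu>, a\<^sup>\<or>) \<ge> 1 = (\<rho>, a\<^sup>\<or>)\<close>, and the two resulting inequalities
  make \<open>|\<mu> - \<rho>|\<^sup>2 \<le> 0\<close>.\<close>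
lemma strictly_dominant_signed_half_sum_eq_rho:
  assumes e: "sign_fun e"
    and dom: "\<And>a. a \<in> S \<Longrightarrow> Re (bf a (signed_half_sum e)) > 0"
  shows "signed_half_sum e = \<rho>"
proof -
  define \<mu> where "\<mu> = signed_half_sum e"
  define d where "d b = (1 - e b) / 2" for b
  have d01: "d b = 0 \<or> d b = 1" if "b \<in> P" for b
    using e that unfolding sign_fun_def d_def by auto
  have diff: "\<rho> - \<mu> = (\<Sum>b\<in>P. csm (d b) b)"
    unfolding \<mu>_def d_def by (rule rho_minus_signed_half_sum)
  have real_\<mu>: "realv \<mu>"
    unfolding \<mu>_def using e by (rule realv_signed_half_sum)
  have dom_diff: "Re (bf a (\<mu> - \<rho>)) \<ge> 0" if a: "a \<in> S" for a
  proof -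
    have aR: "a \<in> R" using simple_root_imp_root[OF a] .
    have "1 - bf \<mu> (coroot a) = (\<Sum>b\<in>P. d b * bf b (coroot a))"
      using arg_cong[OF diff, of "\<lambda>x. bf x (coroot a)"]
      by (simp add: bf_sum_left bf_rho_coroot_simple[OF a])
    moreover have "(\<Sum>b\<in>P. d b * bf b (coroot a)) \<in> \<int>"
    proof (rule Ints_sum)
      fix b assume "b \<in> P"
      then have "d b \<in> \<int>" "bf b (coroot a) \<in> \<int>"
        using d01[of b] bf_coroot_Ints[OF aR] pos_root_imp_root by (auto intro: Ints_0 Ints_1)
      then show "d b * bf b (coroot a) \<in> \<int>" by (rule Ints_mult)
    qed
    ultimately have "1 - bf \<mu> (coroot a) \<in> \<int>" by simp
    then have "bf \<mu> (coroot a) \<in> \<int>"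
      using Ints_diff[OF Ints_1] by fastforce
    then obtain k :: int where k: "bf \<mu> (coroot a) = of_int k"
      by (auto elim: Ints_cases)
    have k_eq: "real_of_int k = 2 * Re (bf a \<mu>) / Re (bf a a)"
      using k bf_coroot_root_eq[OF aR real_\<mu>] by (metis of_real_eq_iff of_real_of_int_eq)
    have "Re (bf a \<mu>) > 0"
      using dom[OF a] unfolding \<mu>_def .
    then have "real_of_int k > 0"
      unfolding k_eq using Re_bf_root_self_pos[OF aR] by simp
    then have "1 \<le> 2 * Re (bf a \<mu>) / Re (bf a a)"
      unfolding k_eq[symmetric] by simp
    then have "Re (bf a a) \<le> 2 * Re (bf a \<mu>)"
      using Re_bf_root_self_pos[OF aR] by (simp add: le_divide_eq)
    moreover have "Re (bf a \<rho>) = Re (bf a a) / 2"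
      by (simp add: bf_simple_rho[OF a])
    ultimately show ?thesis
      by simp
  qed
  have "bf \<rho> x = (\<Sum>b\<in>P. bf b x) / 2" for x
    unfolding rho_def by (simp add: bf_sum_left)
  from arg_cong[OF this[of "\<mu> - \<rho>"], of Re]
  have "Re (bf \<rho> (\<mu> - \<rho>)) = (\<Sum>b\<in>P. Re (bf b (\<mu> - \<rho>))) / 2"
    by (simp del: bf_diff_right)
  also have "\<dots> \<ge> 0"
    using Re_bf_pos_root_nonneg_if_dominant[OF dom_diff] by (simp add: sum_nonneg)
  finally have rho_diff: "Re (bf \<rho> (\<mu> - \<rho>)) \<ge> 0" .
  have dom_sum: "Re (bf b (\<rho> + \<mu>)) \<ge> 0" if "b \<in> P" for b
  proof (rule Re_bf_pos_root_nonneg_if_dominant[OF _ that])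
    fix a assume "a \<in> S"
    then show "Re (bf a (\<rho> + \<mu>)) \<ge> 0"
      using Re_bf_simple_rho_pos dom unfolding \<mu>_def by (simp add: add_nonneg_nonneg less_imp_le)
  qed
  have "Re (bf (\<rho> - \<mu>) (\<rho> + \<mu>)) = (\<Sum>b\<in>P. Re (d b * bf b (\<rho> + \<mu>)))"
    unfolding diff bf_sum_left by (simp only: bf_csm_left Re_sum)
  also have "\<dots> \<ge> 0"
  proof (rule sum_nonneg)
    fix b assume "b \<in> P"
    then show "Re (d b * bf b (\<rho> + \<mu>)) \<ge> 0"
      using d01[of b] dom_sum[of b] by (auto simp del: bf_add_right)
  qed
  finally have sum_diff: "Re (bf (\<rho> - \<mu>) (\<rho> + \<mu>)) \<ge> 0" .
  have "bf (\<rho> - \<mu>) (\<rho> + \<mu>) = - 2 * bf \<rho> (\<mu> - \<rho>) - bf (\<mu> - \<rho>) (\<mu> - \<rho>)"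
    by (simp add: bf_commute[of \<mu> \<rho>] algebra_simps)
  then have "Re (bf (\<mu> - \<rho>) (\<mu> - \<rho>)) \<le> 0"
    using rho_diff sum_diff by simp
  then have "\<mu> - \<rho> = 0"
    using realv_eq_0_if_Re_bf_self_le_0 real_\<mu> realv_rho by blast
  then show ?thesis
    unfolding \<mu>_def by simp
qed

text \<open>A maximiser of \<open>w \<mapsto> (w \<mu>, \<rho>)\<close> over the finite Weyl group is strictly dominant:
  otherwise a simple reflection would increase the pairing.\<close>
lemma weyl_conj_strictly_dominant:
  assumes real: "realv \<mu>" and regular_\<mu>: "\<And>b. b \<in> R \<Longrightarrow> bf \<mu> b \<noteq> 0"
  obtains w where "w \<in> W" "\<And>a. a \<in> S \<Longrightarrow> Re (bf a (w \<mu>)) > 0"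
proof -
  define f where "f w = Re (bf (w \<mu>) \<rho>)" for w
  obtain w where w: "w \<in> W" "f w = Max (f ` W)"
    using Max_in[of "f ` W"] finite_weyl weyl.weyl_id by fastforce
  have w_max: "f u \<le> f w" if "u \<in> W" for u
    using Max_ge[of "f ` W"] finite_weyl that w(2) by simp
  obtain i where i: "i \<in> W" "\<forall>x. i (w x) = x" "\<forall>x. w (i x) = x"
    using weyl_inverse[OF w(1)] by blast
  have "Re (bf a (w \<mu>)) > 0" if a: "a \<in> S" for a
  proof -
    have aR: "a \<in> R" using simple_root_imp_root[OF a] .
    have real_w\<mu>: "realv (w \<mu>)" using realv_weyl[OF w(1) real] .
    have "bf (w \<mu>) a = bf \<mu> (i a)"
      using bf_weyl_weyl[OF w(1), of \<mu> "i a"] i by simp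
    then have "bf a (w \<mu>) \<noteq> 0"
      using regular_\<mu>[OF weyl_root[OF i(1) aR]] by (simp add: bf_commute)
    then have "Re (bf a (w \<mu>)) \<noteq> 0"
      using bf_root_eq_of_real_Re[OF aR real_w\<mu>] by (metis of_real_0)
    moreover have "\<not> Re (bf a (w \<mu>)) < 0"
    proof
      assume neg: "Re (bf a (w \<mu>)) < 0"
      have "f (refl a \<circ> w) = f w - 2 * Re (bf a (w \<mu>)) / Re (bf a a) * Re (bf a \<rho>)"
        unfolding f_def refl_def using bf_coroot_root_eq[OF aR real_w\<mu>]
          bf_root_eq_of_real_Re[OF aR realv_rho]
        by (simp add: bf_commute[of a \<rho>])
      also have "\<dots> > f w"
        using neg Re_bf_root_self_pos[OF aR] Re_bf_simple_rho_pos[OF a]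
        by (simp add: mult_neg_pos divide_neg_pos)
      finally show False
        using w_max weyl.weyl_step[OF w(1) aR] by fastforce
    qed
    ultimately show ?thesis by simp
  qed
  with w(1) show thesis by (rule that)
qed

lemma alt_sum_signed_half_sum:
  assumes "sign_fun e"
  shows "\<exists>c. \<forall>L v. alt_sum L (signed_half_sum e) v = c * alt_sum L \<rho> v"
proof (cases "\<exists>b\<in>R. bf (signed_half_sum e) b = 0")
  case True
  then show ?thesis
    using alt_sum_eq_0_if_orth_root by auto
next
  case False
  then obtain w where w: "w \<in> W" and dom: "\<And>a. a \<in> S \<Longrightarrow> Re (bf a (w (signed_half_sum e))) > 0"
    using weyl_conj_strictly_dominant[OF realv_signed_half_sum[OF assms]] by blast
  obtain e' where "sign_fun e'" and e': "w (signed_half_sum e) = signed_half_sum e'"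
    using weyl_signed_half_sum[OF w assms] .
  have "signed_half_sum e' = \<rho>"
    by (rule strictly_dominant_signed_half_sum_eq_rho[OF \<open>sign_fun e'\<close>]) (use dom e' in simp)
  then have w_eq: "w (signed_half_sum e) = \<rho>"
    by (simp add: e')
  obtain i where i: "i \<in> W" "\<forall>x. i (w x) = x"
    using weyl_inverse[OF w] by blast
  then have "signed_half_sum e = i (w (signed_half_sum e))"
    by simp
  then have "signed_half_sum e = i \<rho>"
    by (simp only: w_eq)
  then show ?thesis
    using alt_sum_weyl[OF i(1)] by auto
qed

theorem weyl_denominator_formula:
  "\<exists>K. K \<noteq> 0 \<and> (\<forall>L v. weyl_denom L v = K * alt_sum L \<rho> v)"
proof -
  let ?e = "\<lambda>X a. if a \<in> X then -1 else 1"
  have "\<forall>X. \<exists>c. \<forall>L v. alt_sum L (signed_half_sum (?e X)) v = c * alt_sum L \<rho> v"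
    by (intro allI alt_sum_signed_half_sum) (simp add: sign_fun_def)
  then obtain c where c: "\<And>X L v. alt_sum L (signed_half_sum (?e X)) v = c X * alt_sum L \<rho> v"
    by (auto dest!: choice)
  define K where "K = (1 / of_nat (card W)) * (\<Sum>X\<in>Pow P. (-1) ^ card X * c X)"
  have formula: "weyl_denom L v = K * alt_sum L \<rho> v" for L v
    unfolding weyl_denom_eq_sum_alt_sum c K_def by (simp add: sum_distrib_right mult.assoc)
  have "exp_diff 1 (bf a \<gamma>) \<noteq> 0" if "a \<in> P" for a
    using exp_diff_of_real_nonzero[of "ht a" 1] ht_pos_root[OF that]
      bf_root_\<gamma>_eq_ht[OF pos_root_imp_root[OF that]] by simp
  then have "weyl_denom 1 \<gamma> \<noteq> 0"
    unfolding weyl_denom_def using finite_pos_roots by simp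
  then have "K \<noteq> 0"
    using formula by auto
  with formula show ?thesis by blast
qed

end

section \<open>The spherical function at \<open>q^(2\<rho>)\<close>\<close>

definition exp_diff_quot :: "real \<Rightarrow> complex \<Rightarrow> complex" where
  "exp_diff_quot L z = (if z = 0 then 2 * of_real L else exp_diff L z / (z / 2))"

lemma exp_diff_has_field_derivative_0: "(exp_diff L has_field_derivative of_real L) (at 0)"
proof -
  have "(exp_diff L has_field_derivative
      exp (0 * of_real L / 2) * (of_real L / 2) - exp (- (0 * of_real L / 2)) * (- (of_real L / 2)))
      (at 0)"
    unfolding exp_diff_def by (auto intro!: derivative_eq_intros)
  then show ?thesis by simp
qed

lemma isCont_exp_diff_quot: "isCont (exp_diff_quot L) z"
proof (cases "z = 0")
  case True
  have "((\<lambda>y. (exp_diff L y - exp_diff L 0) / (y - 0)) \<longlongrightarrow> of_real L) (at 0)"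
    using exp_diff_has_field_derivative_0 unfolding has_field_derivative_iff .
  then have "((\<lambda>y. 2 * ((exp_diff L y - exp_diff L 0) / (y - 0))) \<longlongrightarrow> 2 * of_real L) (at 0)"
    by (intro tendsto_mult tendsto_const)
  then have "(exp_diff_quot L \<longlongrightarrow> 2 * of_real L) (at 0)"
    by (rule iffD1[OF LIM_equal, rotated]) (auto simp: exp_diff_quot_def exp_diff_def)
  then show ?thesis
    unfolding True isCont_def by (simp add: exp_diff_quot_def)
next
  case False
  have "eventually (\<lambda>y. exp_diff_quot L y = exp_diff L y / (y / 2)) (nhds z)"
    using t1_space_nhds[OF False] by eventually_elim (simp add: exp_diff_quot_def)
  moreover have "isCont (\<lambda>y. exp_diff L y / (y / 2)) z"
    unfolding exp_diff_def using False by (intro continuous_intros) auto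
  ultimately show ?thesis
    using isCont_cong[of "exp_diff_quot L" "\<lambda>y. exp_diff L y / (y / 2)" z] by simp
qed

lemma exp_diff_quot_eq_0_iff:
  assumes "L \<noteq> 0"
  shows "exp_diff_quot L z = 0 \<longleftrightarrow> (\<exists>n::int. n \<noteq> 0 \<and> z * of_real L = 2 * of_real pi * \<i> * of_int n)"
proof (cases "z = 0")
  case True
  then show ?thesis using assms by (simp add: exp_diff_quot_def)
next
  case False
  have "exp_diff L z = exp (- (z * of_real L / 2)) * (exp (z * of_real L) - 1)"
    unfolding exp_diff_def by (simp add: right_diff_distrib exp_add[symmetric])
  then have "exp_diff_quot L z = 0 \<longleftrightarrow> exp (z * of_real L) = 1"
    using False by (simp add: exp_diff_quot_def)
  also have "\<dots> \<longleftrightarrow> (\<exists>n::int. z * of_real L = 2 * of_real pi * \<i> * of_int n)"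
    unfolding exp_eq_1 by (auto simp: complex_eq_iff)
  finally show ?thesis
    using False assms by auto
qed

lemma isCont_bf_right: "isCont (bf a) x"
  unfolding bf_def by (intro continuous_intros isCont_vec_nth)

context pos_root_system
begin

lemma Aalt_eq_alt_sum: "Aalt R \<gamma> q \<nu> \<mu> = alt_sum (ln q) \<mu> \<nu>"
  unfolding Aalt_def alt_sum_def qpow_def
  by (rule sum.cong) (auto simp: neg_one_power_wlen)

lemma alt_sum_csm: "alt_sum L (csm c \<mu>) v = alt_sum L \<mu> (csm c v)"
  unfolding alt_sum_def by (rule sum.cong) (auto simp: csm_linear_csm[OF csm_linear_weyl])

lemma prod_bf_rho_pos_roots_nonzero: "(\<Prod>a\<in>P. bf \<rho> a) \<noteq> 0"
  using Re_bf_pos_root_rho_pos finite_pos_roots by (force simp: bf_commute[of \<rho>])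

lemma weyl_denom_two_rho_nonzero:
  assumes "L \<noteq> 0"
  shows "weyl_denom L (csm 2 \<rho>) \<noteq> 0"
proof -
  have "exp_diff L (bf a (csm 2 \<rho>)) \<noteq> 0" if a: "a \<in> P" for a
  proof -
    have "bf a (csm 2 \<rho>) = of_real (2 * Re (bf a \<rho>))"
      using bf_root_eq_of_real_Re[OF pos_root_imp_root[OF a] realv_rho]
      by (metis bf_csm_right of_real_mult of_real_numeral)
    moreover have "2 * Re (bf a \<rho>) \<noteq> 0"
      using Re_bf_pos_root_rho_pos[OF a] by simp
    ultimately show ?thesis
      using exp_diff_of_real_nonzero[OF _ assms] by metis
  qed
  then show ?thesis
    unfolding weyl_denom_def prod_zero_iff[OF finite_pos_roots] by blast
qed

text \<open>For \<open>L = ln q\<close> this is \<open>phi1\<close> at \<open>q^(2\<rho>)\<close>: the denominator formula turns the quotient of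
  alternating sums in \<open>phi_raw\<close> into a quotient of Weyl denominators, and each factor of the
  numerator divided by \<open>(\<alpha>,\<nu>)/2\<close> extends continuously across \<open>(\<alpha>,\<nu>) = 0\<close>.\<close>
definition phi_entire :: "real \<Rightarrow> complex^'n \<Rightarrow> complex" where
  "phi_entire L v =
     (\<Prod>a\<in>P. exp_diff_quot L (bf a v)) * ((\<Prod>a\<in>P. bf \<rho> a) / weyl_denom L (csm 2 \<rho>))"

lemma isCont_phi_entire: "isCont (phi_entire L) v"
  unfolding phi_entire_def
  by (intro continuous_intros continuous_prod isCont_o2[OF isCont_bf_right isCont_exp_diff_quot])

lemma phi_entire_eq_0_iff:
  assumes "L \<noteq> 0"
  shows "phi_entire L v = 0 \<longleftrightarrow> (\<exists>a\<in>P. exp_diff_quot L (bf a v) = 0)"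
proof -
  have "(\<Prod>a\<in>P. bf \<rho> a) / weyl_denom L (csm 2 \<rho>) \<noteq> 0"
    using prod_bf_rho_pos_roots_nonzero weyl_denom_two_rho_nonzero[OF assms] by simp
  then show ?thesis
    unfolding phi_entire_def mult_eq_0_iff prod_zero_iff[OF finite_pos_roots] by argo
qed

lemma chi1_half_minus_rho:
  "chi1 R \<gamma> (csm (1/2) v - \<rho>) = (\<Prod>a\<in>P. bf a v / 2) / (\<Prod>a\<in>P. bf \<rho> a)"
  unfolding chi1_def by (simp add: bf_commute)

lemma phi_raw_eq_phi_entire:
  assumes "chi1 R \<gamma> (csm (1/2) v - \<rho>) \<noteq> 0"
  shows "phi_raw R \<gamma> q v (csm 2 \<rho>) = phi_entire (ln q) v"
proof -
  define L where "L = ln q"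
  obtain K where "K \<noteq> 0" and K: "\<And>L v. weyl_denom L v = K * alt_sum L \<rho> v"
    using weyl_denominator_formula by blast
  have nonzero: "bf a v \<noteq> 0" if "a \<in> P" for a
    using assms that finite_pos_roots unfolding chi1_half_minus_rho by auto
  have "chi R \<gamma> q (csm (1/2) v - \<rho>) (csm 2 \<rho>) = alt_sum L \<rho> v / alt_sum L \<rho> (csm 2 \<rho>)"
    unfolding chi_def Aalt_eq_alt_sum L_def by (simp add: alt_sum_csm)
  also have "\<dots> = weyl_denom L v / weyl_denom L (csm 2 \<rho>)"
    using \<open>K \<noteq> 0\<close> by (simp add: K)
  finally have "phi_raw R \<gamma> q v (csm 2 \<rho>) =
      weyl_denom L v / (\<Prod>a\<in>P. bf a v / 2) * (\<Prod>a\<in>P. bf \<rho> a) / weyl_denom L (csm 2 \<rho>)"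
    unfolding phi_raw_def chi1_half_minus_rho by simp
  also have "weyl_denom L v / (\<Prod>a\<in>P. bf a v / 2) = (\<Prod>a\<in>P. exp_diff_quot L (bf a v))"
    unfolding weyl_denom_def prod_dividef[symmetric] exp_diff_quot_def
    using nonzero by (intro prod.cong) auto
  finally show ?thesis
    unfolding phi_entire_def L_def by (simp add: field_simps)
qed

lemma islimpt_chi1_nonzero: "v islimpt {x. chi1 R \<gamma> (csm (1/2) x - \<rho>) \<noteq> 0}"
proof (unfold islimpt_approachable, intro allI impI)
  fix \<epsilon> :: real
  assume "\<epsilon> > 0"
  moreover have norm_pos: "norm \<gamma> + 1 > 0"
    using norm_ge_zero[of \<gamma>] by linarith
  ultimately have "infinite ({0<..<\<epsilon> / (norm \<gamma> + 1)} - (\<lambda>a. - Re (bf a v) / ht a) ` P)"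
    using finite_pos_roots by (intro Diff_infinite_finite) auto
  then obtain t where "t \<in> {0<..<\<epsilon> / (norm \<gamma> + 1)} - (\<lambda>a. - Re (bf a v) / ht a) ` P"
    using infinite_imp_nonempty by blast
  then have t: "0 < t" "t < \<epsilon> / (norm \<gamma> + 1)" "t \<notin> (\<lambda>a. - Re (bf a v) / ht a) ` P"
    by simp_all
  define x where "x = v + t *\<^sub>R \<gamma>"
  have "bf a x \<noteq> 0" if a: "a \<in> P" for a
  proof
    assume "bf a x = 0"
    then have "Re (bf a (v + csm (of_real t) \<gamma>)) = 0"
      unfolding x_def csm_of_real_eq_scaleR by simp
    then have "Re (bf a v) + t * ht a = 0"
      unfolding ht_def by simp
    then have "t = - Re (bf a v) / ht a"
      using ht_pos_root[OF a] by (simp add: field_simps)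
    then show False
      using t(3) a by blast
  qed
  then have "x \<in> {x. chi1 R \<gamma> (csm (1/2) x - \<rho>) \<noteq> 0}"
    unfolding chi1_half_minus_rho using prod_bf_rho_pos_roots_nonzero finite_pos_roots by simp
  moreover have "\<gamma> \<noteq> 0"
    using roots_nonempty bf_root_\<gamma>_nonzero by fastforce
  then have "x \<noteq> v"
    unfolding x_def using t(1) by simp
  moreover have "dist x v < \<epsilon>"
  proof -
    have "dist x v = t * norm \<gamma>"
      unfolding x_def dist_norm using t(1) by simp
    also have "\<dots> \<le> t * (norm \<gamma> + 1)"
      using t(1) by simp
    also have "\<dots> < \<epsilon>"
      using t(2) norm_pos by (simp add: less_divide_eq mult.commute)
    finally show ?thesis .
  qed
  ultimately show "\<exists>x'\<in>{x. chi1 R \<gamma> (csm (1/2) x - \<rho>) \<noteq> 0}. x' \<noteq> v \<and> dist x' v < \<epsilon>"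
    by blast
qed

lemma phi1_eq_phi_entire: "phi1 R \<gamma> q v (csm 2 \<rho>) = phi_entire (ln q) v"
proof -
  define D where "D = {x. chi1 R \<gamma> (csm (1/2) x - \<rho>) \<noteq> 0}"
  have "\<not> trivial_limit (at v within D)"
    unfolding trivial_limit_within D_def using islimpt_chi1_nonzero by blast
  moreover have "((\<lambda>x. phi_raw R \<gamma> q x (csm 2 \<rho>)) \<longlongrightarrow> phi_entire (ln q) v) (at v within D)"
  proof -
    have "(phi_entire (ln q) \<longlongrightarrow> phi_entire (ln q) v) (at v within D)"
      using tendsto_within_subset[OF isCont_phi_entire[unfolded isCont_def] subset_UNIV] .
    moreover have "eventually (\<lambda>x. phi_entire (ln q) x = phi_raw R \<gamma> q x (csm 2 \<rho>)) (at v within D)"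
      unfolding eventually_at_filter D_def using phi_raw_eq_phi_entire by simp
    ultimately show ?thesis
      by (rule Lim_transform_eventually)
  qed
  ultimately show ?thesis
    unfolding phi1_def D_def[symmetric] by (rule tendsto_Lim)
qed

lemma bf_coroot_eq_divide_ln_powr_iff:
  assumes "a \<in> R" and "0 < q" "q \<noteq> 1"
  shows "bf v (coroot a) = c / of_real (ln (q powr (Re (bf a a) / 2)))
    \<longleftrightarrow> bf a v * of_real (ln q) = c"
proof -
  define A where "A = Re (bf a a)"
  have A: "A > 0"
    unfolding A_def using Re_bf_root_self_pos[OF assms(1)] .
  have "bf a a = of_real A"
    unfolding A_def using bf_root_eq_of_real_Re[OF assms(1) realv_root[OF assms(1)]] .
  moreover have "ln (q powr (A / 2)) = A / 2 * ln q"
    using assms(2) by (simp add: ln_powr)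
  moreover have "ln q \<noteq> 0"
    using assms(2,3) by simp
  ultimately show ?thesis
    unfolding bf_coroot A_def[symmetric] using A by (auto simp: bf_commute field_simps)
qed

end

theorem proposition4p4:
  fixes R :: "(complex^'n::finite) set" and \<gamma> :: "complex^'n" and q :: real
    and \<nu> :: "complex^'n"
  assumes "simple_root_system R" and "regular R \<gamma>"
    and "0 < q" and "q < 1"
  shows "phi1 R \<gamma> q \<nu> (csm 2 (rho R \<gamma>)) = 0 \<longleftrightarrow>
    (\<exists>\<alpha>\<in>pos_roots R \<gamma>. \<exists>k::int. k \<noteq> 0 \<and>
       bf \<nu> (coroot \<alpha>) = 2 * pi * \<i> * of_int k / of_real (ln (q powr (Re (bf \<alpha> \<alpha>) / 2))))"
proof -
  interpret pos_root_system R \<gamma>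
    using assms(1,2) by (rule pos_root_system.intro)
  have "ln q \<noteq> 0"
    using assms(3,4) by simp
  then have "phi1 R \<gamma> q \<nu> (csm 2 \<rho>) = 0 \<longleftrightarrow>
      (\<exists>\<alpha>\<in>P. \<exists>k::int. k \<noteq> 0 \<and> bf \<alpha> \<nu> * of_real (ln q) = 2 * pi * \<i> * of_int k)"
    by (simp add: phi1_eq_phi_entire phi_entire_eq_0_iff exp_diff_quot_eq_0_iff)
  also have "\<dots> \<longleftrightarrow> (\<exists>\<alpha>\<in>P. \<exists>k::int. k \<noteq> 0 \<and>
      bf \<nu> (coroot \<alpha>) = 2 * pi * \<i> * of_int k / of_real (ln (q powr (Re (bf \<alpha> \<alpha>) / 2))))"
  proof (intro bex_cong ex_cong1 conj_cong refl)
    fix \<alpha> k assume "\<alpha> \<in> P"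
    have "q \<noteq> 1"
      using assms(4) by simp
    then show "bf \<alpha> \<nu> * of_real (ln q) = 2 * pi * \<i> * of_int k \<longleftrightarrow>
        bf \<nu> (coroot \<alpha>) = 2 * pi * \<i> * of_int k / of_real (ln (q powr (Re (bf \<alpha> \<alpha>) / 2)))"
      using bf_coroot_eq_divide_ln_powr_iff[OF pos_root_imp_root[OF \<open>\<alpha> \<in> P\<close>] assms(3)] by blast
  qed
  finally show ?thesis .
qed

end
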